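(* Let $d\ge1$, $\alpha\in(0,1)$, $\sigma_+,\sigma_->0$, and let $\mathcal{D}$ be the distribution on $\mathbb{R}^d\times\{\pm1\}$ with $y=+1$ with probability $\alpha$ and $y=-1$ with probability $1-\alpha$, where $\boldsymbol{x}\sim\mathcal{N}(\boldsymbol{1},\sigma_+^2 I)$ if $y=+1$ and $\boldsymbol{x}\sim\mathcal{N}(-\boldsymbol{1},\sigma_-^2 I)$ if $y=-1$, with $\boldsymbol{1}=(1,\dots,1)\in\mathbb{R}^d$. Let $f^*(\boldsymbol{x})=\mathrm{sign}(\langle\boldsymbol{w^*},\boldsymbol{x}\rangle+b^* )$ be the linear model minimizing the misclassification risk $R(f)=\alpha\,\mathbb{P}(f(\boldsymbol{x})=-1\mid y=+1)+(1-\alpha)\,\mathbb{P}(f(\boldsymbol{x})=+1\mid y=-1)$ on $\mathcal{D}$. If $\sigma_+>\sigma_-$ and $\frac{\alpha\sigma_-}{(1-\alpha)\sigma_+}>1$, then $S_{P,+1}(f^* )>S_{P,-1}(f^* )$.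
   Context: Fix $\sigma_P>0$ and let $\boldsymbol{\epsilon}_w\sim\mathcal{N}(\boldsymbol{0},\sigma_P^2 I_d)$ and $\epsilon_b\sim\mathcal{N}(0,\sigma_P^2)$ be independent parameter-level noise. The parameter smoothness (evaluated at the class centers $\pm\boldsymbol{1}$) of $f(\boldsymbol{x})=\mathrm{sign}(\langle\boldsymbol{w},\boldsymbol{x}\rangle+b)$ is $S_{P,+1}(f)=\mathbb{P}(\langle\boldsymbol{w}+\boldsymbol{\epsilon}_w,\boldsymbol{1}\rangle+b+\epsilon_b>0)$ for class $+1$ and $S_{P,-1}(f)=\mathbb{P}(\langle\boldsymbol{w}+\boldsymbol{\epsilon}_w,-\boldsymbol{1}\rangle+b+\epsilon_b<0)$ for class $-1$. *)

theory Defs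
  imports "HOL-Probability.Probability"
begin

definition ones :: "real ^ 'n" where
  "ones = (\<chi> i. 1)"

definition gauss_iso :: "real ^ 'n \<Rightarrow> real \<Rightarrow> (real ^ 'n) measure" where
  "gauss_iso mu s =
     density lborel (\<lambda>x. ennreal (\<Prod>i\<in>UNIV. normal_density (mu $ i) s (x $ i)))"

text \<open>Linear model f(x) = sign(<w,x> + b), with the convention that f(x) = +1 iff
  <w,x> + b > 0 and f(x) = -1 otherwise.\<close>
definition risk :: "real \<Rightarrow> real \<Rightarrow> real \<Rightarrow> real ^ 'n \<Rightarrow> real \<Rightarrow> real" where
  "risk alpha sp sm w b =
     alpha * measure (gauss_iso ones sp) {x. w \<bullet> x + b \<le> 0}
     + (1 - alpha) * measure (gauss_iso (- ones) sm) {x. w \<bullet> x + b > 0}"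

definition param_noise :: "real \<Rightarrow> ((real ^ 'n) \<times> real) measure" where
  "param_noise sP = gauss_iso 0 sP \<Otimes>\<^sub>M density lborel (normal_density 0 sP)"

definition S_plus :: "real \<Rightarrow> real ^ 'n \<Rightarrow> real \<Rightarrow> real" where
  "S_plus sP w b = measure (param_noise sP) {(ew, eb). (w + ew) \<bullet> ones + b + eb > 0}"

definition S_minus :: "real \<Rightarrow> real ^ 'n \<Rightarrow> real \<Rightarrow> real" where
  "S_minus sP w b = measure (param_noise sP) {(ew, eb). (w + ew) \<bullet> (- ones) + b + eb < 0}"

end

(* An optimal linear classifier has positive bias.  Suppose b <= 0.  If w = 0, the constant
   classifier +1 is better, because alpha > 1 - alpha.  If <w,1> < 0, then -w is better.  Otherwise,
   in the two classes <w,x> is normal with means <w,1> and -<w,1> and standard deviations sp|w| and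
   sm|w|; since sp > sm and alpha sm > (1 - alpha) sp, the alpha-weighted density of class +1
   exceeds the (1 - alpha)-weighted density of class -1 just below the threshold -b, so raising the
   bias lowers the risk.
   Given b > 0, condition on the weight noise and put t = <w + eps_w, 1>.  Class +1 keeps its label
   when eps_b > -(t + b) and class -1 when eps_b < t - b, which by symmetry of eps_b has the
   probability of eps_b > b - t, a strictly smaller tail. *)

theory Submission
  imports Defs
begin

section \<open>Strict comparison of integrals\<close>

lemma nn_integral_indicator_less:
  fixes f g :: "'a \<Rightarrow> real"
  assumes [measurable]: "f \<in> borel_measurable M" "g \<in> borel_measurable M" "A \<in> sets M"
    and finite: "(\<integral>\<^sup>+x. ennreal (f x) * indicator A x \<partial>M) \<noteq> \<infinity>"
    and "emeasure M A \<noteq> 0"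
    and f_nonneg: "\<And>x. x \<in> A \<Longrightarrow> 0 \<le> f x" and less: "\<And>x. x \<in> A \<Longrightarrow> f x < g x"
  shows "(\<integral>\<^sup>+x. ennreal (f x) * indicator A x \<partial>M) < (\<integral>\<^sup>+x. ennreal (g x) * indicator A x \<partial>M)"
proof (rule nn_integral_less)
  show "AE x in M. ennreal (f x) * indicator A x \<le> ennreal (g x) * indicator A x"
    using less by (intro AE_I2) (auto simp: indicator_def intro: ennreal_leI less_imp_le)
  show "\<not> (AE x in M. ennreal (g x) * indicator A x \<le> ennreal (f x) * indicator A x)"
  proof
    assume "AE x in M. ennreal (g x) * indicator A x \<le> ennreal (f x) * indicator A x"
    then have "AE x in M. x \<notin> A"
    proof eventually_elim
      case (elim x)
      show "x \<notin> A"
      proof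
        assume "x \<in> A"
        with elim have "ennreal (g x) \<le> ennreal (f x)"
          by simp
        with f_nonneg[OF \<open>x \<in> A\<close>] less[OF \<open>x \<in> A\<close>] show False
          by (simp add: ennreal_le_iff)
      qed
    qed
    then have "emeasure M A = 0"
      using sets.sets_into_space[OF \<open>A \<in> sets M\<close>]
      by (subst (asm) AE_iff_measurable[where N=A]) auto
    with \<open>emeasure M A \<noteq> 0\<close> show False ..
  qed
qed (use finite in auto)

lemma measure_pair_less_of_slices:
  assumes "prob_space M" "prob_space N" "A \<in> sets (M \<Otimes>\<^sub>M N)" "B \<in> sets (M \<Otimes>\<^sub>M N)"
    and less: "\<And>x. x \<in> space M \<Longrightarrow> measure N (Pair x -` A) < measure N (Pair x -` B)"
  shows "measure (M \<Otimes>\<^sub>M N) A < measure (M \<Otimes>\<^sub>M N) B"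
proof -
  interpret pair_prob_space M N
    using assms by (simp add: pair_prob_space_def pair_sigma_finite_def prob_space_imp_sigma_finite)
  have "(\<integral>\<^sup>+x. emeasure N (Pair x -` A) \<partial>M) < (\<integral>\<^sup>+x. emeasure N (Pair x -` B) \<partial>M)"
  proof (rule nn_integral_less)
    show "(\<integral>\<^sup>+x. emeasure N (Pair x -` A) \<partial>M) \<noteq> \<infinity>"
      using M2.emeasure_pair_measure_alt[OF \<open>A \<in> sets (M \<Otimes>\<^sub>M N)\<close>] P.emeasure_finite[of A] by simp
    show "AE x in M. emeasure N (Pair x -` A) \<le> emeasure N (Pair x -` B)"
      using less by (intro AE_I2) (simp add: M2.emeasure_eq_measure less_imp_le)
    show "\<not> (AE x in M. emeasure N (Pair x -` B) \<le> emeasure N (Pair x -` A))"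
    proof
      assume "AE x in M. emeasure N (Pair x -` B) \<le> emeasure N (Pair x -` A)"
      then have "AE x in M. False"
        using AE_space
      proof eventually_elim
        case (elim x)
        with less[of x] show False
          by (simp add: M2.emeasure_eq_measure)
      qed
      then show False
        by simp
    qed
  qed (use assms in \<open>simp_all add: M2.measurable_emeasure_Pair\<close>)
  then have "emeasure (M \<Otimes>\<^sub>M N) A < emeasure (M \<Otimes>\<^sub>M N) B"
    using assms by (simp add: M2.emeasure_pair_measure_alt)
  then show ?thesis
    by (simp add: P.emeasure_eq_measure ennreal_less_iff)
qed

section \<open>The normal distribution on the real line\<close>

abbreviation normal_measure :: "real \<Rightarrow> real \<Rightarrow> real measure" where
  "normal_measure m s \<equiv> density lborel (normal_density m s)"

definition normal_tail :: "real \<Rightarrow> real \<Rightarrow> real \<Rightarrow> real" where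
  "normal_tail m s a = measure (normal_measure m s) {a<..}"

lemma normal_tail_shift: "normal_tail m s a = normal_tail 0 s (a - m)"
proof -
  have "emeasure (normal_measure m s) {a<..}
      = (\<integral>\<^sup>+x. ennreal (normal_density m s (m + 1 * x)) * indicator {a<..} (m + 1 * x) \<partial>lborel)"
    by (subst emeasure_density, simp, simp, subst nn_integral_real_affine[where c=1 and t=m]) auto
  also have "\<dots> = emeasure (normal_measure 0 s) {a - m<..}"
    by (subst emeasure_density) (auto intro!: nn_integral_cong simp: normal_density_def indicator_def)
  finally show ?thesis
    by (simp add: normal_tail_def measure_def)
qed

lemma normal_measure_lessThan_eq_tail: "measure (normal_measure 0 s) {..<t} = normal_tail 0 s (- t)"
proof -
  have "emeasure (normal_measure 0 s) {..<t}
      = (\<integral>\<^sup>+x. ennreal (normal_density 0 s (0 + -1 * x)) * indicator {..<t} (0 + -1 * x) \<partial>lborel)"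
    by (subst emeasure_density, simp, simp, subst nn_integral_real_affine[where c="-1" and t=0]) auto
  also have "\<dots> = emeasure (normal_measure 0 s) {- t<..}"
    by (subst emeasure_density) (auto intro!: nn_integral_cong simp: normal_density_def indicator_def)
  finally show ?thesis
    by (simp add: normal_tail_def measure_def)
qed

lemma normal_measure_atMost_eq:
  assumes "0 < s"
  shows "measure (normal_measure m s) {..a} = 1 - normal_tail m s a"
proof -
  have "UNIV - {a<..} = {..a}"
    by auto
  then show ?thesis
    using prob_space.prob_compl[OF prob_space_normal_density[OF assms], of "{a<..}"]
    by (simp add: normal_tail_def)
qed

lemma normal_measure_interval_weighted_less:
  assumes "0 < s1" "0 < s2" "c < d" "0 \<le> k1" "0 \<le> k2"
    and less: "\<And>y. c < y \<Longrightarrow> y \<le> d \<Longrightarrow> k2 * normal_density m2 s2 y < k1 * normal_density m1 s1 y"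
  shows "k2 * measure (normal_measure m2 s2) {c<..d} < k1 * measure (normal_measure m1 s1) {c<..d}"
proof -
  have weighted: "ennreal (k * measure (normal_measure m s) {c<..d})
      = (\<integral>\<^sup>+y. ennreal (k * normal_density m s y) * indicator {c<..d} y \<partial>lborel)"
    if "0 \<le> k" "0 < s" for k m s
  proof -
    interpret prob_space "normal_measure m s"
      using \<open>0 < s\<close> by (rule prob_space_normal_density)
    have "ennreal (k * measure (normal_measure m s) {c<..d}) = ennreal k * emeasure (normal_measure m s) {c<..d}"
      using \<open>0 \<le> k\<close> by (simp add: emeasure_eq_measure ennreal_mult)
    also have "\<dots> = (\<integral>\<^sup>+y. ennreal k * (ennreal (normal_density m s y) * indicator {c<..d} y) \<partial>lborel)"
      by (simp add: emeasure_density nn_integral_cmult)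
    finally show ?thesis
      using \<open>0 \<le> k\<close> by (simp add: ennreal_mult mult.assoc normal_density_nonneg)
  qed
  have "ennreal (k2 * measure (normal_measure m2 s2) {c<..d})
      < ennreal (k1 * measure (normal_measure m1 s1) {c<..d})"
    unfolding weighted[OF \<open>0 \<le> k1\<close> \<open>0 < s1\<close>] weighted[OF \<open>0 \<le> k2\<close> \<open>0 < s2\<close>]
  proof (rule nn_integral_indicator_less)
    show "(\<integral>\<^sup>+y. ennreal (k2 * normal_density m2 s2 y) * indicator {c<..d} y \<partial>lborel) \<noteq> \<infinity>"
      unfolding weighted[OF \<open>0 \<le> k2\<close> \<open>0 < s2\<close>, symmetric] by simp
    show "emeasure lborel {c<..d} \<noteq> 0"
      using \<open>c < d\<close> by simp
    show "0 \<le> k2 * normal_density m2 s2 y" for y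
      using \<open>0 \<le> k2\<close> by (simp add: normal_density_nonneg)
    show "k2 * normal_density m2 s2 y < k1 * normal_density m1 s1 y" if "y \<in> {c<..d}" for y
      using less that by simp
  qed measurable
  then show ?thesis
    by (subst (asm) ennreal_less_iff) (use \<open>0 \<le> k2\<close> in auto)
qed

lemma normal_measure_interval_pos:
  assumes "0 < s" "c < d"
  shows "0 < measure (normal_measure m s) {c<..d}"
proof -
  have "0 * measure (normal_measure m s) {c<..d} < 1 * measure (normal_measure m s) {c<..d}"
    by (rule normal_measure_interval_weighted_less) (use assms in \<open>auto simp: normal_density_pos\<close>)
  then show ?thesis
    by simp
qed

lemma normal_tail_split:
  assumes "0 < s" "c \<le> d"
  shows "normal_tail m s c = normal_tail m s d + measure (normal_measure m s) {c<..d}"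
proof -
  interpret prob_space "normal_measure m s"
    using \<open>0 < s\<close> by (rule prob_space_normal_density)
  have "{c<..} = {d<..} \<union> {c<..d}"
    using assms by auto
  moreover have "prob ({d<..} \<union> {c<..d}) = prob {d<..} + prob {c<..d}"
    by (rule finite_measure_Union) auto
  ultimately show ?thesis
    unfolding normal_tail_def by simp
qed

lemma normal_tail_strict_antimono:
  assumes "0 < s" "c < d"
  shows "normal_tail m s d < normal_tail m s c"
  using normal_tail_split[of s c d m] normal_measure_interval_pos[OF assms] assms by simp

lemma normal_tail_strict_mono_mean:
  assumes "0 < s" "m1 < m2"
  shows "normal_tail m1 s a < normal_tail m2 s a"
  using normal_tail_strict_antimono[OF assms(1), of "a - m2" "a - m1" 0] assms
  by (simp add: normal_tail_shift[of m1] normal_tail_shift[of m2])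

section \<open>Linear functionals of the isotropic Gaussian\<close>

lemma prod_Basis_vec: "(\<Prod>b\<in>(Basis :: (real^'n) set). F b) = (\<Prod>i\<in>UNIV. F (axis i 1))"
  by (simp add: Basis_vec_def UNION_singleton_eq_range prod.reindex axis_eq_axis inj_on_def)

lemma indicator_box_vec:
  fixes l u :: "real^'n"
  shows "(indicator (box l u) x :: ennreal) = (\<Prod>i\<in>UNIV. indicator {l$i<..<u$i} (x$i))"
proof (cases "x \<in> box l u")
  case True
  then show ?thesis
    by (auto simp: mem_box_cart indicator_def)
next
  case False
  then obtain i where "\<not> (l$i < x$i \<and> x$i < u$i)"
    by (auto simp: mem_box_cart)
  then have "(\<Prod>i\<in>UNIV. (indicator {l$i<..<u$i} (x$i) :: ennreal)) = 0"
    by (subst ennreal_prod_eq_0) (auto simp: indicator_def intro!: bexI[of _ i])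
  with False show ?thesis
    by simp
qed

lemma measurable_vec_lambda_PiM:
  assumes "\<And>i. sets (M i) = sets borel"
  shows "(\<lambda>f. \<chi> i. f i) \<in> measurable (PiM UNIV M) (borel :: (real^'n) measure)"
proof (subst borel_measurable_euclidean_space, intro ballI)
  fix b :: "real^'n"
  assume "b \<in> Basis"
  then obtain j where b: "b = axis j 1"
    by (auto simp: Basis_vec_def)
  have "(\<lambda>f. f j) \<in> measurable (PiM UNIV M) (M j)"
    by (rule measurable_component_singleton) simp
  then have "(\<lambda>f. f j) \<in> borel_measurable (PiM UNIV M)"
    using assms measurable_cong_sets by blast
  then show "(\<lambda>f. (\<chi> i. f i) \<bullet> b) \<in> borel_measurable (PiM UNIV M)"
    by (simp add: b cart_eq_inner_axis[symmetric])
qed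

lemma space_gauss_iso [simp]: "space (gauss_iso mu s) = UNIV"
  by (simp add: gauss_iso_def)

lemma sets_gauss_iso [simp]: "sets (gauss_iso mu s) = sets borel"
  by (simp add: gauss_iso_def)

lemma emeasure_gauss_iso_box:
  fixes mu l u :: "real^'n"
  shows "emeasure (gauss_iso mu s) (box l u)
    = (\<Prod>i\<in>UNIV. emeasure (normal_measure (mu$i) s) {l$i<..<u$i})"
proof -
  define f where "f b t = ennreal (normal_density (mu \<bullet> b) s t) * indicator {l\<bullet>b<..<u\<bullet>b} t"
    for b :: "real^'n" and t :: real
  have "emeasure (gauss_iso mu s) (box l u) =
      (\<integral>\<^sup>+x. ennreal (\<Prod>i\<in>UNIV. normal_density (mu $ i) s (x $ i)) * indicator (box l u) x \<partial>lborel)"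
    unfolding gauss_iso_def by (subst emeasure_density) auto
  also have "\<dots> = (\<integral>\<^sup>+x. (\<Prod>b\<in>Basis. f b (x \<bullet> b)) \<partial>lborel)"
    by (intro nn_integral_cong)
      (simp add: prod_Basis_vec f_def cart_eq_inner_axis prod.distrib indicator_box_vec
        prod_ennreal normal_density_nonneg)
  also have "\<dots> = (\<Prod>b\<in>Basis. (\<integral>\<^sup>+t. f b t \<partial>lborel))"
    by (rule nn_integral_lborel_prod) (auto simp: f_def)
  also have "\<dots> = (\<Prod>i\<in>UNIV. emeasure (normal_measure (mu$i) s) {l$i<..<u$i})"
    by (simp add: prod_Basis_vec f_def cart_eq_inner_axis emeasure_density)
  finally show ?thesis .
qed

lemma gauss_iso_eq_distr_PiM:
  fixes mu :: "real^'n"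
  assumes "0 < s"
  shows "gauss_iso mu s = distr (PiM UNIV (\<lambda>i. normal_measure (mu$i) s)) borel (\<lambda>f. \<chi> i. f i)"
    (is "_ = distr ?P borel ?T")
proof -
  have normal: "prob_space (normal_measure (mu$i) s)" for i
    using \<open>0 < s\<close> by (rule prob_space_normal_density)
  interpret Pf: finite_product_sigma_finite "\<lambda>i. normal_measure (mu$i) s" UNIV
    by (intro finite_product_sigma_finite.intro product_sigma_finite.intro
        finite_product_sigma_finite_axioms.intro prob_space_imp_sigma_finite normal) simp
  have T[measurable]: "?T \<in> measurable ?P borel"
    by (rule measurable_vec_lambda_PiM) simp
  interpret D: prob_space "distr ?P borel ?T"
    by (intro prob_space.prob_space_distr prob_space_PiM normal T)
  have box: "emeasure (gauss_iso mu s) (box l u) = emeasure (distr ?P borel ?T) (box l u)"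
    for l u :: "real^'n"
  proof -
    have "emeasure (gauss_iso mu s) (box l u) = emeasure ?P (Pi\<^sub>E UNIV (\<lambda>i. {l$i<..<u$i}))"
      by (simp add: emeasure_gauss_iso_box Pf.measure_times)
    also have "Pi\<^sub>E UNIV (\<lambda>i. {l$i<..<u$i}) = ?T -` box l u \<inter> space ?P"
      by (auto simp: space_PiM mem_box_cart PiE_def Pi_def extensional_def)
    also have "emeasure ?P \<dots> = emeasure (distr ?P borel ?T) (box l u)"
      by (subst emeasure_distr) auto
    finally show ?thesis .
  qed
  let ?E = "range (\<lambda>(a, b). box a b :: (real^'n) set)"
  let ?A = "\<lambda>n::nat. box (- (real n *\<^sub>R One)) (real n *\<^sub>R One) :: (real^'n) set"
  show ?thesis
  proof (rule measure_eqI_generator_eq[where E="?E" and \<Omega>=UNIV and A="?A"])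
    show "Int_stable ?E"
      by (auto simp: Int_stable_def box_Int_box)
    show "sets (gauss_iso mu s) = sigma_sets UNIV ?E" "sets (distr ?P borel ?T) = sigma_sets UNIV ?E"
      by (simp_all add: borel_eq_box)
    show "range ?A \<subseteq> ?E" "(\<Union>i. ?A i) = UNIV"
      unfolding UN_box_eq_UNIV by auto
    show "emeasure (gauss_iso mu s) (?A i) \<noteq> \<infinity>" for i
      using box D.emeasure_finite by simp
  qed (use box in auto)
qed

lemma prob_space_gauss_iso:
  fixes mu :: "real^'n"
  assumes "0 < s"
  shows "prob_space (gauss_iso mu s)"
  unfolding gauss_iso_eq_distr_PiM[OF assms]
  by (intro prob_space.prob_space_distr prob_space_PiM prob_space_normal_density assms
      measurable_vec_lambda_PiM) simp

lemma indep_vars_PiM_components: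
  assumes "I \<noteq> {}" and M: "\<And>i. i \<in> I \<Longrightarrow> prob_space (M i)"
  shows "prob_space.indep_vars (PiM I M) M (\<lambda>i f. f i) I"
proof -
  interpret P: prob_space "PiM I M"
    using M by (rule prob_space_PiM)
  have "distr (PiM I M) (PiM I M) (\<lambda>f. \<lambda>i\<in>I. f i) = distr (PiM I M) (PiM I M) (\<lambda>f. f)"
    by (rule distr_cong) (auto simp: space_PiM)
  also have "\<dots> = PiM I (\<lambda>i. distr (PiM I M) (M i) (\<lambda>f. f i))"
    using M by (auto intro!: PiM_cong simp: distr_PiM_component)
  finally show ?thesis
    using \<open>I \<noteq> {}\<close> by (subst P.indep_vars_iff_distr_eq_PiM') auto
qed

lemma distr_inner_gauss_iso:
  fixes mu w :: "real^'n"
  assumes "0 < s" "w \<noteq> 0"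
  shows "distr (gauss_iso mu s) borel (\<lambda>x. w \<bullet> x) = normal_measure (w \<bullet> mu) (s * norm w)"
proof -
  let ?P = "PiM UNIV (\<lambda>i. normal_measure (mu$i) s)"
  \<comment> \<open>\<open>sum_indep_normal\<close> needs positive variances, so the zero coordinates of \<open>w\<close> are dropped.\<close>
  let ?I = "{i. w$i \<noteq> 0}"
  have normal: "prob_space (normal_measure (mu$i) s)" for i
    using \<open>0 < s\<close> by (rule prob_space_normal_density)
  interpret P: prob_space ?P
    using normal by (rule prob_space_PiM)
  have "?I \<noteq> {}"
    using \<open>w \<noteq> 0\<close> by (auto simp: vec_eq_iff)
  have component[measurable]: "(\<lambda>f. f i) \<in> borel_measurable ?P" for i
    using measurable_component_singleton[of i UNIV "\<lambda>i. normal_measure (mu$i) s"]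
    by (simp cong: measurable_cong_sets)
  have "P.indep_vars (\<lambda>i. normal_measure (mu$i) s) (\<lambda>i f. f i) UNIV"
    using normal by (intro indep_vars_PiM_components) auto
  then have "P.indep_vars (\<lambda>_. borel) (\<lambda>i f. w$i * f i) UNIV"
    by (rule P.indep_vars_compose2[where Y="\<lambda>i x. w$i * x"]) simp
  then have indep: "P.indep_vars (\<lambda>_. borel) (\<lambda>i f. w$i * f i) ?I"
    by (rule P.indep_vars_subset) simp
  have summand: "distributed ?P lborel (\<lambda>f. w$i * f i) (normal_density (w$i * mu$i) (\<bar>w$i\<bar> * s))"
    if "i \<in> ?I" for i
  proof -
    have "distr ?P lborel (\<lambda>f. f i) = normal_measure (mu$i) s"
      using distr_PiM_component[of UNIV "\<lambda>i. normal_measure (mu$i) s" i] normal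
      by (simp cong: distr_cong)
    then have "distributed ?P lborel (\<lambda>f. f i) (normal_density (mu$i) s)"
      by (simp add: distributed_def)
    then show ?thesis
      using P.normal_density_affine[of "\<lambda>f. f i" "mu$i" s "w$i" 0] \<open>0 < s\<close> that by simp
  qed
  have sum: "distributed ?P lborel (\<lambda>f. \<Sum>i\<in>?I. w$i * f i)
      (normal_density (\<Sum>i\<in>?I. w$i * mu$i) (sqrt (\<Sum>i\<in>?I. (\<bar>w$i\<bar> * s)\<^sup>2)))"
    by (rule P.sum_indep_normal[OF _ \<open>?I \<noteq> {}\<close> indep _ summand]) (use \<open>0 < s\<close> in simp_all)
  have inner: "(\<Sum>i\<in>?I. w$i * v$i) = w \<bullet> v" for v :: "real^'n"
    unfolding inner_vec_def inner_real_def by (rule sum.mono_neutral_left) auto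
  have "(\<Sum>i\<in>?I. (\<bar>w$i\<bar> * s)\<^sup>2) = s\<^sup>2 * (\<Sum>i\<in>UNIV. (w$i)\<^sup>2)"
    by (simp add: power_mult_distrib sum_distrib_left mult.commute)
      (rule sum.mono_neutral_left, auto)
  then have sd: "sqrt (\<Sum>i\<in>?I. (\<bar>w$i\<bar> * s)\<^sup>2) = s * norm w"
    using \<open>0 < s\<close> by (simp add: norm_vec_def L2_set_def real_sqrt_mult)
  have "distr (gauss_iso mu s) borel (\<lambda>x. w \<bullet> x) = distr ?P borel (\<lambda>f. w \<bullet> (\<chi> i. f i))"
    by (simp add: gauss_iso_eq_distr_PiM[OF \<open>0 < s\<close>] distr_distr measurable_vec_lambda_PiM comp_def)
  also have "\<dots> = distr ?P lborel (\<lambda>f. \<Sum>i\<in>?I. w$i * f i)"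
    by (rule distr_cong) (simp_all flip: inner)
  also have "\<dots> = normal_measure (w \<bullet> mu) (s * norm w)"
    using sum unfolding distributed_def inner sd by simp
  finally show ?thesis .
qed

lemma measure_gauss_iso_inner_vimage:
  fixes mu w :: "real^'n"
  assumes "0 < s" "w \<noteq> 0" "A \<in> sets borel"
  shows "measure (gauss_iso mu s) {x. w \<bullet> x \<in> A} = measure (normal_measure (w \<bullet> mu) (s * norm w)) A"
proof -
  have "(\<lambda>x. w \<bullet> x) \<in> borel_measurable (gauss_iso mu s)"
    unfolding measurable_cong_sets[OF sets_gauss_iso refl] by simp
  then show ?thesis
    using measure_distr[of "\<lambda>x. w \<bullet> x" "gauss_iso mu s" borel A] \<open>A \<in> sets borel\<close>
    by (simp add: distr_inner_gauss_iso[OF \<open>0 < s\<close> \<open>w \<noteq> 0\<close>] vimage_def)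
qed

section \<open>Risk and parameter smoothness of linear classifiers\<close>

lemma weighted_normal_density_less:
  fixes p q sp sm m y :: real
  assumes "0 < sm" "sm \<le> sp" "0 < q" "q * sp < p * sm"
    and "- 2 * m * y < sp\<^sup>2 * ln (p * sm / (q * sp))"
  shows "q * normal_density (- m) sm y < p * normal_density m sp y"
proof -
  define r where "r = p * sm / (q * sp)"
  have "0 < sp"
    using assms by linarith
  then have "0 < p"
    using assms by (metis mult_pos_pos order.strict_trans zero_less_mult_pos2)
  then have "0 < r"
    using assms by (simp add: r_def)
  have "(y + m)\<^sup>2 / (2 * sp\<^sup>2) \<le> (y + m)\<^sup>2 / (2 * sm\<^sup>2)"
    using assms by (intro divide_left_mono mult_left_mono power_mono) auto
  moreover have "(y - m)\<^sup>2 / (2 * sp\<^sup>2) - (y + m)\<^sup>2 / (2 * sp\<^sup>2) = - 2 * m * y / sp\<^sup>2"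
    using \<open>0 < sp\<close> by (simp add: field_simps power2_eq_square)
  moreover have "- 2 * m * y / sp\<^sup>2 < ln r"
    using assms(5) \<open>0 < sp\<close> by (subst pos_divide_less_eq) (auto simp: r_def mult.commute)
  ultimately have "exp (- (y + m)\<^sup>2 / (2 * sm\<^sup>2)) < exp (ln r - (y - m)\<^sup>2 / (2 * sp\<^sup>2))"
    by simp
  also have "\<dots> = r * exp (- (y - m)\<^sup>2 / (2 * sp\<^sup>2))"
    using \<open>0 < r\<close> by (simp add: exp_diff exp_minus field_simps)
  finally have "q / (sqrt (2 * pi) * sm) * exp (- (y + m)\<^sup>2 / (2 * sm\<^sup>2))
      < q / (sqrt (2 * pi) * sm) * (r * exp (- (y - m)\<^sup>2 / (2 * sp\<^sup>2)))"
    using assms by (intro mult_strict_left_mono) auto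
  then show ?thesis
    using assms \<open>0 < sp\<close>
    by (simp add: normal_density_def r_def real_sqrt_mult field_simps)
qed

lemma risk_eq_normal_tails:
  fixes w :: "real^'n"
  assumes "0 < sp" "0 < sm" "w \<noteq> 0"
  shows "risk alpha sp sm w b = alpha * (1 - normal_tail (w \<bullet> ones) (sp * norm w) (- b))
    + (1 - alpha) * normal_tail (- (w \<bullet> ones)) (sm * norm w) (- b)"
proof -
  have "{x. w \<bullet> x + b \<le> 0} = {x. w \<bullet> x \<in> {..- b}}" "{x. w \<bullet> x + b > 0} = {x. w \<bullet> x \<in> {- b<..}}"
    by auto
  moreover have "measure (gauss_iso ones sp) {x. w \<bullet> x \<in> {..- b}} = 1 - normal_tail (w \<bullet> ones) (sp * norm w) (- b)"
    using assms by (subst measure_gauss_iso_inner_vimage) (simp_all add: normal_measure_atMost_eq)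
  moreover have "measure (gauss_iso (- ones) sm) {x. w \<bullet> x \<in> {- b<..}} = normal_tail (- (w \<bullet> ones)) (sm * norm w) (- b)"
    using assms by (subst measure_gauss_iso_inner_vimage) (simp_all add: normal_tail_def)
  ultimately show ?thesis
    unfolding risk_def by simp
qed

lemma risk_zero_weight:
  assumes "0 < sp" "0 < sm"
  shows "risk alpha sp sm (0 :: real^'n) b = (if b \<le> 0 then alpha else 1 - alpha)"
proof -
  interpret Gp: prob_space "gauss_iso (ones :: real^'n) sp"
    using \<open>0 < sp\<close> by (rule prob_space_gauss_iso)
  interpret Gm: prob_space "gauss_iso (- ones :: real^'n) sm"
    using \<open>0 < sm\<close> by (rule prob_space_gauss_iso)
  show ?thesis
    by (simp add: risk_def Gp.prob_space[simplified] Gm.prob_space[simplified])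
qed

lemma risk_neg_weight_less:
  fixes w :: "real^'n"
  assumes "0 < alpha" "alpha < 1" "0 < sp" "0 < sm" "w \<bullet> ones < 0"
  shows "risk alpha sp sm (- w) b < risk alpha sp sm w b"
proof -
  have "w \<noteq> 0"
    using assms by auto
  then have "0 < norm w"
    by simp
  then have "alpha * normal_tail (w \<bullet> ones) (sp * norm w) (- b)
      < alpha * normal_tail (- (w \<bullet> ones)) (sp * norm w) (- b)"
    "(1 - alpha) * normal_tail (w \<bullet> ones) (sm * norm w) (- b)
      < (1 - alpha) * normal_tail (- (w \<bullet> ones)) (sm * norm w) (- b)"
    using assms by (auto intro!: normal_tail_strict_mono_mean)
  moreover have "risk alpha sp sm w b = alpha - alpha * normal_tail (w \<bullet> ones) (sp * norm w) (- b)
      + (1 - alpha) * normal_tail (- (w \<bullet> ones)) (sm * norm w) (- b)"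
    using assms \<open>w \<noteq> 0\<close> by (simp add: risk_eq_normal_tails right_diff_distrib)
  moreover have "risk alpha sp sm (- w) b = alpha - alpha * normal_tail (- (w \<bullet> ones)) (sp * norm w) (- b)
      + (1 - alpha) * normal_tail (w \<bullet> ones) (sm * norm w) (- b)"
    using assms \<open>w \<noteq> 0\<close> by (simp add: risk_eq_normal_tails right_diff_distrib)
  ultimately show ?thesis
    by linarith
qed

lemma risk_raise_bias_less:
  fixes w :: "real^'n"
  assumes "0 < alpha" "alpha < 1" "0 < sm" "sm \<le> sp" "(1 - alpha) * sp < alpha * sm"
    and "w \<noteq> 0" "0 \<le> w \<bullet> ones" "b \<le> 0"
  shows "\<exists>b'. risk alpha sp sm w b' < risk alpha sp sm w b"
proof -
  define m u where "m = w \<bullet> ones" and "u = norm w"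
  define r where "r = alpha * (sm * u) / ((1 - alpha) * (sp * u))"
  \<comment> \<open>The new bias \<open>d\<close> is small enough that the weighted class +1 density dominates on \<open>(-d, -b]\<close>.\<close>
  define d where "d = (sp * u)\<^sup>2 * ln r / (2 * (m + 1))"
  have "0 < u" "0 < sp" "0 \<le> m"
    using assms by (auto simp: u_def m_def)
  have ratio: "(1 - alpha) * (sp * u) < alpha * (sm * u)"
    using assms \<open>0 < u\<close> by (metis mult.assoc mult_strict_right_mono)
  then have "1 < r"
    using assms \<open>0 < u\<close> \<open>0 < sp\<close> by (simp add: r_def)
  then have "0 < (sp * u)\<^sup>2 * ln r"
    using \<open>0 < u\<close> \<open>0 < sp\<close> by simp
  then have "0 < d" "2 * m * d < (sp * u)\<^sup>2 * ln r"
    using \<open>0 \<le> m\<close> by (auto simp: d_def field_simps)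
  have "(1 - alpha) * measure (normal_measure (- m) (sm * u)) {- d<..- b}
      < alpha * measure (normal_measure m (sp * u)) {- d<..- b}"
  proof (rule normal_measure_interval_weighted_less)
    fix y
    assume "- d < y" "y \<le> - b"
    have "- 2 * m * y \<le> 2 * m * d"
      using mult_left_mono[of "- y" d m] \<open>- d < y\<close> \<open>0 \<le> m\<close> by (simp add: mult.commute)
    also have "\<dots> < (sp * u)\<^sup>2 * ln r"
      by fact
    finally show "(1 - alpha) * normal_density (- m) (sm * u) y < alpha * normal_density m (sp * u) y"
      using assms \<open>0 < u\<close> ratio
      by (intro weighted_normal_density_less) (simp_all add: r_def mult_right_mono)
  qed (use assms \<open>0 < u\<close> \<open>0 < sp\<close> \<open>0 < d\<close> in auto)
  moreover have "- d \<le> - b"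
    using \<open>0 < d\<close> \<open>b \<le> 0\<close> by simp
  ultimately have "risk alpha sp sm w d < risk alpha sp sm w b"
    using assms \<open>0 < u\<close> \<open>0 < sp\<close>
    by (simp add: risk_eq_normal_tails normal_tail_split[of _ "- d" "- b"] m_def u_def algebra_simps)
  then show ?thesis ..
qed

lemma S_minus_less_S_plus:
  fixes w :: "real^'n"
  assumes "0 < sP" "0 < b"
  shows "S_minus sP w b < S_plus sP w b"
proof -
  let ?G = "gauss_iso (0::real^'n) sP" and ?N = "normal_measure 0 sP"
  have sets_eq: "sets (?G \<Otimes>\<^sub>M ?N) = sets borel"
    by (subst borel_prod[symmetric]) (intro sets_pair_measure_cong, auto)
  let ?t = "\<lambda>ew. (w + ew) \<bullet> ones"
  show ?thesis
    unfolding S_plus_def S_minus_def param_noise_def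
  proof (rule measure_pair_less_of_slices)
    show "prob_space ?G"
      using \<open>0 < sP\<close> by (rule prob_space_gauss_iso)
    show "prob_space ?N"
      using \<open>0 < sP\<close> by (rule prob_space_normal_density)
    show "{(ew, eb). (w + ew) \<bullet> (- ones) + b + eb < 0} \<in> sets (?G \<Otimes>\<^sub>M ?N)"
      "{(ew, eb). (w + ew) \<bullet> ones + b + eb > 0} \<in> sets (?G \<Otimes>\<^sub>M ?N)"
      unfolding sets_eq case_prod_beta'
      by (intro borel_open open_Collect_less continuous_intros)+
    fix ew :: "real^'n"
    have "Pair ew -` {(ew, eb). (w + ew) \<bullet> (- ones) + b + eb < 0} = {..< ?t ew - b}"
      "Pair ew -` {(ew, eb). (w + ew) \<bullet> ones + b + eb > 0} = {- (?t ew + b)<..}"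
      by auto
    moreover have "normal_tail 0 sP (b - ?t ew) < normal_tail 0 sP (- (?t ew + b))"
      using assms by (intro normal_tail_strict_antimono) auto
    ultimately show "measure ?N (Pair ew -` {(ew, eb). (w + ew) \<bullet> (- ones) + b + eb < 0})
        < measure ?N (Pair ew -` {(ew, eb). (w + ew) \<bullet> ones + b + eb > 0})"
      by (simp add: normal_measure_lessThan_eq_tail normal_tail_def)
  qed
qed

lemma risk_nonpos_bias_not_minimal:
  fixes w :: "real^'n"
  assumes "0 < alpha" "alpha < 1" "0 < sm" "sm < sp" "(1 - alpha) * sp < alpha * sm" "b \<le> 0"
  shows "\<exists>(w' :: real^'n) b'. risk alpha sp sm w' b' < risk alpha sp sm w b"
proof (cases "w = 0")
  case True
  have "(1 - alpha) * sp < alpha * sp"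
    using assms by (meson mult_strict_left_mono order.strict_trans)
  then have "risk alpha sp sm (0 :: real^'n) 1 < risk alpha sp sm w b"
    using True assms by (simp add: risk_zero_weight)
  then show ?thesis
    by blast
next
  case False
  show ?thesis
  proof (cases "w \<bullet> ones < 0")
    case True
    then have "risk alpha sp sm (- w) b < risk alpha sp sm w b"
      using assms by (intro risk_neg_weight_less) auto
    then show ?thesis
      by blast
  next
    case False
    then show ?thesis
      using risk_raise_bias_less[OF assms(1-3) _ assms(5) \<open>w \<noteq> 0\<close> _ assms(6)] assms(4)
      by (auto simp: not_less)
  qed
qed

theorem lemmaD3:
  fixes alpha sp sm sP b :: real and w :: "real ^ 'n"
  assumes "0 < alpha" "alpha < 1"
    and "0 < sp" "0 < sm" "0 < sP"
    and "sp > sm"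
    and "alpha * sm / ((1 - alpha) * sp) > 1"
    and "\<forall>w' b'. risk alpha sp sm w b \<le> risk alpha sp sm (w' :: real ^ 'n) b'"
  shows "S_plus sP w b > S_minus sP w b"
proof -
  have "(1 - alpha) * sp < alpha * sm"
    using assms(1-4,7) by (simp add: less_divide_eq)
  then have "0 < b"
    using risk_nonpos_bias_not_minimal[of alpha sm sp b w] assms(1,2,4,6,8) by (meson not_le)
  then show ?thesis
    using S_minus_less_S_plus assms(5) by blast
qed

end
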